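(* Let $\vec f=(f_1,\dots,f_n)$ be a profile of acknowledgement-based protocols, let $i\in[n]$, and fix a protocol $f_i'$ for player $i$. For $\tau^*\ge1$ and a history $h_{i,\tau^*}=(a_{i,1},\dots,a_{i,\tau^*})$ consistent with $(\vec f_{-i},f_i')$, let $r_i(h_{i,\tau^*})$ be the protocol that plays $a_{i,t}$ with probability $1$ at each slot $1\le t\le\tau^*$ and follows $f'_{i,t}$ for $t>\tau^*$. If there exists a finite $\tau^*\ge1$ such that $C_i^{(\vec f_{-i},r_i(h_{i,\tau^*}))}(h_0)\ge C_i^{(\vec f_{-i},f_i)}(h_0)$ for every such $h_{i,\tau^*}$, then $C_i^{(\vec f_{-i},f_i')}(h_0)\ge C_i^{(\vec f_{-i},f_i)}(h_0)$.
   Context: Contention game: $n$ players, channels $K=\{1,\dots,k\}$, slots $t=1,2,\dots$; each player has one packet, initially pending; in each slot a pending player chooses (possibly randomly) an action in $\{0,1,\dots,k\}$ ($0$ = idle, $a$ = transmit on channel $a$); a lone transmitter on a channel succeeds and leaves, colliding transmitters remain pending. Acknowledgement-based protocols: decision rules depend only on the player's personal action history; only transmitting players learn whether they succeeded. $T_i$ is player $i$'s latency and $C_i^{\vec g}(h_0)=\mathbb E[T_i\mid \vec g]$ her unconditional expected latency under profile $\vec g$; $(\vec f_{-i},g_i)$ is $\vec f$ with $f_i$ replaced by $g_i$. A history is consistent with a profile if it occurs for player $i$ with positive probability under it. *)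

theory Defs
  imports "HOL-Probability.Probability"
begin

(* An action is a natural number: 0 = idle, a \<in> {1..k} = transmit on channel a.
   A personal history is the list of the player's own past actions.
   An acknowledgement-based protocol maps the personal history to a distribution
   over the next action.  (While pending, a player only ever receives "failure"
   feedback, so the action history is the whole information.) *)
type_synonym protocol = "nat list \<Rightarrow> nat pmf"

definition valid_protocol :: "nat \<Rightarrow> protocol \<Rightarrow> bool" where
  "valid_protocol k g \<longleftrightarrow> (\<forall>h. set_pmf (g h) \<subseteq> {0..k})"

(* Global state: for every player j, (pending flag, personal action history).
   Players are 0..n-1.  After a player has succeeded, its protocol is still
   consulted (its "intended" action stream keeps being recorded) but these
   actions do not affect anybody. *)
type_synonym state = "nat \<Rightarrow> bool \<times> nat list"

definition lone_success :: "nat \<Rightarrow> state \<Rightarrow> (nat \<Rightarrow> nat) \<Rightarrow> nat \<Rightarrow> bool" where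
  "lone_success n s a j \<longleftrightarrow> fst (s j) \<and> a j \<noteq> 0 \<and>
      (\<forall>j'<n. j' \<noteq> j \<and> fst (s j') \<longrightarrow> a j' \<noteq> a j)"

definition step :: "nat \<Rightarrow> (nat \<Rightarrow> protocol) \<Rightarrow> state \<Rightarrow> state pmf" where
  "step n f s =
     map_pmf (\<lambda>a j. if j < n
                     then (fst (s j) \<and> \<not> lone_success n s a j, snd (s j) @ [a j])
                     else s j)
       (Pi_pmf {..<n} 0 (\<lambda>j. f j (snd (s j))))"

fun state_dist :: "nat \<Rightarrow> (nat \<Rightarrow> protocol) \<Rightarrow> nat \<Rightarrow> state pmf" where
  "state_dist n f 0 = return_pmf (\<lambda>j. (j < n, []))"
| "state_dist n f (Suc t) = bind_pmf (state_dist n f t) (step n f)"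

(* C_i^f(h_0) = E[T_i] = sum_{t>=0} Pr[T_i > t] = sum_t Pr[i still pending after t slots]
   (in [0,\<infinity>]) *)
definition exp_latency :: "nat \<Rightarrow> (nat \<Rightarrow> protocol) \<Rightarrow> nat \<Rightarrow> ennreal" where
  "exp_latency n f i = (\<Sum>t. ennreal (measure_pmf.prob (state_dist n f t) {s. fst (s i)}))"

definition consistent :: "nat \<Rightarrow> (nat \<Rightarrow> protocol) \<Rightarrow> nat \<Rightarrow> nat list \<Rightarrow> bool" where
  "consistent n f i h \<longleftrightarrow>
     measure_pmf.prob (state_dist n f (length h)) {s. snd (s i) = h} > 0"

definition replay :: "nat list \<Rightarrow> protocol \<Rightarrow> protocol" where
  "replay h g = (\<lambda>hist. if length hist < length h then return_pmf (h ! length hist) else g hist)"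

end

theory Submission
  imports Defs
begin

text \<open>
  Actions depend only on the player's own history, and the model records a player's actions
  even after her success, so the players' histories evolve independently: after \<open>t\<close> slots
  they are independent, player \<open>j\<close>'s history being distributed as a solo run of \<open>f j\<close>, and
  the global state is a deterministic function of them. Splitting player \<open>i\<close>'s run of
  \<open>f'\<close> at its first \<open>\<tau>\<close> actions shows that the state distribution under \<open>f(i := f')\<close> is
  the mixture, over histories \<open>h\<close> of a solo run of \<open>f'\<close>, of the state distributions under
  \<open>f(i := replay h f')\<close>. The expected latency is a sum of probabilities and hence commutes
  with the mixture, whose weights lie exactly on the consistent histories.
\<close>

fun history_pmf :: "protocol \<Rightarrow> nat \<Rightarrow> nat list pmf" where
  "history_pmf g 0 = return_pmf []"
| "history_pmf g (Suc t) = bind_pmf (history_pmf g t) (\<lambda>x. map_pmf (\<lambda>a. x @ [a]) (g x))"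

lemma length_history_pmf: "x \<in> set_pmf (history_pmf g t) \<Longrightarrow> length x = t"
  by (induction t arbitrary: x) auto

lemma map_take_history_pmf:
  "t \<le> \<tau> \<Longrightarrow> map_pmf (take t) (history_pmf g \<tau>) = history_pmf g t"
proof (induction \<tau>)
  case (Suc \<tau>)
  show ?case
  proof (cases "t = Suc \<tau>")
    case True
    then show ?thesis
      by (simp add: map_pmf_idI length_history_pmf del: history_pmf.simps)
  next
    case False
    then have "t \<le> \<tau>" using Suc.prems by simp
    have "map_pmf (take t) (history_pmf g (Suc \<tau>))
          = bind_pmf (history_pmf g \<tau>) (\<lambda>x. return_pmf (take t x))"
      unfolding history_pmf.simps map_bind_pmf map_pmf_comp
      by (intro bind_pmf_cong refl) (simp add: \<open>t \<le> \<tau>\<close> length_history_pmf)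
    also have "\<dots> = history_pmf g t"
      using Suc.IH \<open>t \<le> \<tau>\<close> by (simp add: map_pmf_def)
    finally show ?thesis .
  qed
qed simp

lemma history_pmf_replay_prefix:
  "t \<le> length h \<Longrightarrow> history_pmf (replay h g) t = return_pmf (take t h)"
  by (induction t) (auto simp: replay_def take_Suc_conv_app_nth bind_return_pmf)

lemma history_pmf_replay_mixture:
  "history_pmf g t = bind_pmf (history_pmf g \<tau>) (\<lambda>h. history_pmf (replay h g) t)"
proof (induction t)
  case 0
  show ?case by simp
next
  case (Suc t)
  show ?case
  proof (cases "Suc t \<le> \<tau>")
    case True
    have "bind_pmf (history_pmf g \<tau>) (\<lambda>h. history_pmf (replay h g) (Suc t))
          = map_pmf (take (Suc t)) (history_pmf g \<tau>)"
      unfolding map_pmf_def using True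
      by (intro bind_pmf_cong refl) (simp add: history_pmf_replay_prefix length_history_pmf
                                         del: history_pmf.simps)
    then show ?thesis
      using map_take_history_pmf[OF True] by simp
  next
    case False
    have "history_pmf g (Suc t) = bind_pmf (history_pmf g \<tau>) (\<lambda>h.
            bind_pmf (history_pmf (replay h g) t) (\<lambda>x. map_pmf (\<lambda>a. x @ [a]) (g x)))"
      by (simp only: history_pmf.simps Suc.IH bind_assoc_pmf)
    also have "\<dots> = bind_pmf (history_pmf g \<tau>) (\<lambda>h. history_pmf (replay h g) (Suc t))"
      using False
      by (auto simp: replay_def dest!: length_history_pmf intro!: bind_pmf_cong)
    finally show ?thesis .
  qed
qed

definition histories_pmf :: "nat \<Rightarrow> (nat \<Rightarrow> protocol) \<Rightarrow> nat \<Rightarrow> (nat \<Rightarrow> nat list) pmf" where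
  "histories_pmf n f t = Pi_pmf {..<n} [] (\<lambda>j. history_pmf (f j) t)"

lemma set_histories_pmf:
  assumes "hs \<in> set_pmf (histories_pmf n f t)"
  shows "\<forall>j<n. length (hs j) = t" and "\<forall>j\<ge>n. hs j = []"
proof -
  have "hs \<in> PiE_dflt {..<n} [] (\<lambda>j. set_pmf (history_pmf (f j) t))"
    using assms unfolding histories_pmf_def by (subst (asm) set_Pi_pmf) (auto simp: o_def)
  then show "\<forall>j<n. length (hs j) = t" and "\<forall>j\<ge>n. hs j = []"
    by (auto simp: PiE_dflt_def dest: length_history_pmf)
qed

lemma Pi_pmf_map_componentwise:
  assumes "finite A"
  shows "Pi_pmf A d (\<lambda>j. map_pmf (g j) (p j)) =
         map_pmf (\<lambda>a j. if j \<in> A then g j (a j) else d) (Pi_pmf A d' p)"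
proof -
  have "Pi_pmf A d (\<lambda>j. map_pmf (g j) (p j)) =
        Pi_pmf A d (\<lambda>j. bind_pmf (p j) (\<lambda>a. return_pmf (g j a)))"
    by (simp add: map_pmf_def)
  also have "\<dots> = bind_pmf (Pi_pmf A d' p) (\<lambda>a. Pi_pmf A d (\<lambda>j. return_pmf (g j (a j))))"
    by (rule Pi_pmf_bind[OF assms])
  finally show ?thesis
    using assms by (simp add: map_pmf_def)
qed

lemma histories_pmf_Suc:
  "histories_pmf n f (Suc t) = bind_pmf (histories_pmf n f t) (\<lambda>hs.
     map_pmf (\<lambda>a j. if j < n then hs j @ [a j] else []) (Pi_pmf {..<n} 0 (\<lambda>j. f j (hs j))))"
proof -
  have "histories_pmf n f (Suc t) = bind_pmf (histories_pmf n f t) (\<lambda>hs.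
          Pi_pmf {..<n} [] (\<lambda>j. map_pmf (\<lambda>a. hs j @ [a]) (f j (hs j))))"
    unfolding histories_pmf_def by (simp add: Pi_pmf_bind[where d'="[]"])
  then show ?thesis
    by (simp add: Pi_pmf_map_componentwise[where d'=0])
qed

definition slot_update :: "nat \<Rightarrow> state \<Rightarrow> (nat \<Rightarrow> nat) \<Rightarrow> state" where
  "slot_update n s a = (\<lambda>j. if j < n
     then (fst (s j) \<and> \<not> lone_success n s a j, snd (s j) @ [a j]) else s j)"

lemma step_eq_map_slot_update:
  "step n f s = map_pmf (slot_update n s) (Pi_pmf {..<n} 0 (\<lambda>j. f j (snd (s j))))"
  unfolding step_def slot_update_def ..

lemma slot_update_cong: "(\<And>j. j < n \<Longrightarrow> a j = b j) \<Longrightarrow> slot_update n s a = slot_update n s b"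
  unfolding slot_update_def lone_success_def by (intro ext) auto

fun state_of_histories :: "nat \<Rightarrow> nat \<Rightarrow> (nat \<Rightarrow> nat list) \<Rightarrow> state" where
  "state_of_histories n 0 hs = (\<lambda>j. (j < n, []))"
| "state_of_histories n (Suc t) hs =
     slot_update n (state_of_histories n t (\<lambda>j. butlast (hs j))) (\<lambda>j. last (hs j))"

lemma snd_state_of_histories:
  "\<forall>j<n. length (hs j) = t \<Longrightarrow> j < n \<Longrightarrow> snd (state_of_histories n t hs j) = hs j"
proof (induction t arbitrary: hs)
  case (Suc t)
  then have "snd (state_of_histories n t (\<lambda>j. butlast (hs j)) j) = butlast (hs j)"
    by simp
  moreover have "hs j \<noteq> []"
    using Suc.prems by auto
  ultimately show ?case
    using Suc.prems by (simp add: slot_update_def)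
qed simp

lemma state_dist_eq_map_histories:
  "state_dist n f t = map_pmf (state_of_histories n t) (histories_pmf n f t)"
proof (induction t)
  case 0
  show ?case by (simp add: histories_pmf_def)
next
  case (Suc t)
  let ?extend = "\<lambda>hs a j. if j < n then hs j @ [a j] else []"
  have "step n f (state_of_histories n t hs) =
        map_pmf (state_of_histories n (Suc t) \<circ> ?extend hs) (Pi_pmf {..<n} 0 (\<lambda>j. f j (hs j)))"
    if hs: "hs \<in> set_pmf (histories_pmf n f t)" for hs
  proof -
    note lengths = set_histories_pmf[OF hs]
    have "Pi_pmf {..<n} 0 (\<lambda>j. f j (snd (state_of_histories n t hs j)))
          = Pi_pmf {..<n} 0 (\<lambda>j. f j (hs j))"
      by (rule Pi_pmf_cong) (auto simp: snd_state_of_histories lengths)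
    moreover have "(\<lambda>j. butlast (?extend hs a j)) = hs" for a
      using lengths by auto
    ultimately show ?thesis
      unfolding step_eq_map_slot_update
      by (auto intro!: map_pmf_cong slot_update_cong)
  qed
  then show ?case
    unfolding Suc state_dist.simps bind_map_pmf histories_pmf_Suc map_bind_pmf map_pmf_comp
    by (intro bind_pmf_cong refl) (simp add: o_def)
qed

lemma map_history_state_dist:
  assumes "i < n"
  shows "map_pmf (\<lambda>s. snd (s i)) (state_dist n f t) = history_pmf (f i) t"
proof -
  have "map_pmf (\<lambda>s. snd (s i)) (state_dist n f t) = map_pmf (\<lambda>hs. hs i) (histories_pmf n f t)"
    unfolding state_dist_eq_map_histories map_pmf_comp
    by (intro map_pmf_cong refl) (simp add: snd_state_of_histories set_histories_pmf assms)
  then show ?thesis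
    unfolding histories_pmf_def by (simp add: Pi_pmf_component assms)
qed

lemma consistent_iff_set_history_pmf:
  assumes "i < n"
  shows "consistent n f i h \<longleftrightarrow> h \<in> set_pmf (history_pmf (f i) (length h))"
proof -
  have "measure_pmf.prob (state_dist n f (length h)) {s. snd (s i) = h}
        = pmf (history_pmf (f i) (length h)) h"
    by (simp flip: map_history_state_dist[OF assms] add: pmf_map vimage_def)
  then show ?thesis
    unfolding consistent_def by (simp add: pmf_positive_iff)
qed

lemma Pi_pmf_fun_upd_bind:
  assumes "finite A" "i \<in> A"
  shows "Pi_pmf A d (p(i := bind_pmf W K)) = bind_pmf W (\<lambda>w. Pi_pmf A d (p(i := K w)))"
proof -
  define p' where "p' = (\<lambda>x. if x = i then W else return_pmf undefined)"
  define K' where "K' = (\<lambda>x w. if x = i then K w else p x)"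
  have "Pi_pmf A d (p(i := bind_pmf W K)) = Pi_pmf A d (\<lambda>x. bind_pmf (p' x) (K' x))"
    by (rule Pi_pmf_cong) (auto simp: p'_def K'_def bind_return_pmf)
  also have "\<dots> = bind_pmf (Pi_pmf A d' p') (\<lambda>g. Pi_pmf A d (\<lambda>x. K' x (g x)))"
    by (rule Pi_pmf_bind[OF assms(1)])
  also have "\<dots> = bind_pmf (map_pmf (\<lambda>g. g i) (Pi_pmf A d' p')) (\<lambda>w. Pi_pmf A d (p(i := K w)))"
    unfolding bind_map_pmf by (intro bind_pmf_cong refl Pi_pmf_cong) (auto simp: K'_def)
  also have "map_pmf (\<lambda>g. g i) (Pi_pmf A d' p') = W"
    using assms by (simp add: Pi_pmf_component p'_def)
  finally show ?thesis .
qed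

lemma state_dist_replay_mixture:
  assumes "i < n"
  shows "state_dist n (f(i := g)) t =
         bind_pmf (history_pmf g \<tau>) (\<lambda>h. state_dist n (f(i := replay h g)) t)"
proof -
  have "histories_pmf n (f(i := g)) t = Pi_pmf {..<n} []
          ((\<lambda>j. history_pmf (f j) t)(i := bind_pmf (history_pmf g \<tau>) (\<lambda>h. history_pmf (replay h g) t)))"
    unfolding histories_pmf_def
    by (intro Pi_pmf_cong) (auto simp flip: history_pmf_replay_mixture)
  also have "\<dots> = bind_pmf (history_pmf g \<tau>) (\<lambda>h. histories_pmf n (f(i := replay h g)) t)"
    unfolding histories_pmf_def using assms
    by (subst Pi_pmf_fun_upd_bind) (auto intro!: bind_pmf_cong Pi_pmf_cong)
  finally show ?thesis
    by (simp add: state_dist_eq_map_histories map_bind_pmf)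
qed

lemma exp_latency_mixture:
  assumes "\<And>t. state_dist n F t = bind_pmf W (\<lambda>w. state_dist n (G w) t)"
  shows "exp_latency n F i = (\<integral>\<^sup>+w. exp_latency n (G w) i \<partial>measure_pmf W)"
proof -
  have latency_emeasure: "exp_latency n F' i =
      (\<Sum>t. emeasure (measure_pmf (state_dist n F' t)) {s. fst (s i)})" for F'
    by (simp add: exp_latency_def measure_pmf.emeasure_eq_measure)
  show ?thesis
    unfolding latency_emeasure assms
    by (simp add: nn_integral_suminf)
qed

theorem corollary1:
  fixes n k i :: nat and f :: "nat \<Rightarrow> protocol" and f' :: protocol
  assumes "\<forall>j<n. valid_protocol k (f j)"
    and "valid_protocol k f'"
    and "i < n"
    and "\<exists>\<tau>\<ge>1. \<forall>h. length h = \<tau> \<and> consistent n (f(i := f')) i h \<longrightarrow>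
            exp_latency n (f(i := replay h f')) i \<ge> exp_latency n f i"
  shows "exp_latency n (f(i := f')) i \<ge> exp_latency n f i"
proof -
  obtain \<tau> where replay_worse: "\<And>h. length h = \<tau> \<Longrightarrow> consistent n (f(i := f')) i h \<Longrightarrow>
      exp_latency n (f(i := replay h f')) i \<ge> exp_latency n f i"
    using assms(4) by blast
  have "exp_latency n (f(i := f')) i =
        (\<integral>\<^sup>+h. exp_latency n (f(i := replay h f')) i \<partial>measure_pmf (history_pmf f' \<tau>))"
    by (rule exp_latency_mixture) (rule state_dist_replay_mixture[OF \<open>i < n\<close>])
  also have "\<dots> \<ge> (\<integral>\<^sup>+h. exp_latency n f i \<partial>measure_pmf (history_pmf f' \<tau>))"
  proof (intro nn_integral_mono_AE AE_pmfI)
    fix h assume h: "h \<in> set_pmf (history_pmf f' \<tau>)"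
    then have "length h = \<tau>"
      by (rule length_history_pmf)
    moreover have "consistent n (f(i := f')) i h"
      using h \<open>length h = \<tau>\<close> by (simp add: consistent_iff_set_history_pmf \<open>i < n\<close>)
    ultimately show "exp_latency n f i \<le> exp_latency n (f(i := replay h f')) i"
      by (rule replay_worse)
  qed
  finally show ?thesis
    by (simp add: measure_pmf.emeasure_space_1)
qed

end
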